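(* Let $k\ge 1$ and let $L=(l_1,\ldots,l_k)$ be a sequence of positive integers, and let $S=S(L)$ be the spider defined by $L$. Let $t$ be an integer with $1\le t\le \alpha(S)$. Then for each $1\le i\le k$ and each $1\le j<l_i$ we have $$|\mathcal{I}^t_{v_{i,j}}(S)|\le |\mathcal{I}^t_{v_{i,l_i}}(S)|.$$
   Context: For a graph $G$, $\alpha(G)$ is the maximum size of an independent set in $G$, and for an integer $t\le\alpha(G)$, $\mathcal{I}^t(G)$ denotes the family of all independent sets of $G$ of size $t$. For a vertex $x$, $\mathcal{I}^t_x(G)$ denotes the subfamily of sets in $\mathcal{I}^t(G)$ containing $x$ (the star centered at $x$). Given a sequence of positive integers $L=(l_1,\ldots,l_k)$, the spider $S(L)$ is the tree consisting of a head vertex $v_0$ and, for each $1\le i\le k$, a leg which is the path $v_0,v_{i,1},v_{i,2},\ldots,v_{i,l_i}$; distinct legs share only $v_0$. *)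

theory Defs
  imports Main
begin

definition indep_set :: "'a set \<Rightarrow> ('a \<Rightarrow> 'a \<Rightarrow> bool) \<Rightarrow> 'a set \<Rightarrow> bool" where
  "indep_set V E A \<longleftrightarrow> A \<subseteq> V \<and> (\<forall>x\<in>A. \<forall>y\<in>A. \<not> E x y)"

text \<open>Independence number (V finite).\<close>
definition indep_number :: "'a set \<Rightarrow> ('a \<Rightarrow> 'a \<Rightarrow> bool) \<Rightarrow> nat" where
  "indep_number V E = Max (card ` {A. indep_set V E A})"

definition indep_family :: "'a set \<Rightarrow> ('a \<Rightarrow> 'a \<Rightarrow> bool) \<Rightarrow> nat \<Rightarrow> 'a set set" where
  "indep_family V E t = {A. indep_set V E A \<and> card A = t}"

definition indep_star :: "'a set \<Rightarrow> ('a \<Rightarrow> 'a \<Rightarrow> bool) \<Rightarrow> nat \<Rightarrow> 'a \<Rightarrow> 'a set set" where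
  "indep_star V E t x = {A \<in> indep_family V E t. x \<in> A}"

text \<open>Spider vertices: the head v_0, and Leg i j = v_{i,j} (1-based indices).\<close>
datatype spider_vertex = Head | Leg nat nat

text \<open>Spider S(L) for L = [l_1, ..., l_k]; leg i has length L ! (i - 1).\<close>
definition spider_vertices :: "nat list \<Rightarrow> spider_vertex set" where
  "spider_vertices L = insert Head {Leg i j | i j. 1 \<le> i \<and> i \<le> length L \<and> 1 \<le> j \<and> j \<le> L ! (i - 1)}"

definition spider_adj0 :: "nat list \<Rightarrow> spider_vertex \<Rightarrow> spider_vertex \<Rightarrow> bool" where
  "spider_adj0 L u v \<longleftrightarrow>
     (\<exists>i. 1 \<le> i \<and> i \<le> length L \<and> 1 \<le> L ! (i - 1) \<and> u = Head \<and> v = Leg i 1) \<or>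
     (\<exists>i j. 1 \<le> i \<and> i \<le> length L \<and> 1 \<le> j \<and> j + 1 \<le> L ! (i - 1) \<and> u = Leg i j \<and> v = Leg i (j + 1))"

definition spider_adj :: "nat list \<Rightarrow> spider_vertex \<Rightarrow> spider_vertex \<Rightarrow> bool" where
  "spider_adj L u v \<longleftrightarrow> spider_adj0 L u v \<or> spider_adj0 L v u"

end

theory Submission
  imports Defs
begin

text \<open>Reflecting the segment \<open>v\<^sub>i\<^sub>,\<^sub>j, \<dots>, v\<^sub>i\<^sub>,\<^sub>l\<close> of the leg onto itself maps every
  independent set through \<open>v\<^sub>i\<^sub>,\<^sub>j\<close> but not through the leaf \<open>v\<^sub>i\<^sub>,\<^sub>l\<close> to one through the leaf:
  the only edge it destroys, \<open>v\<^sub>i\<^sub>,\<^sub>j\<^sub>-\<^sub>1 v\<^sub>i\<^sub>,\<^sub>j\<close>, becomes the non-edge \<open>v\<^sub>i\<^sub>,\<^sub>j\<^sub>-\<^sub>1 v\<^sub>i\<^sub>,\<^sub>l\<close>, and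
  no new edge appears because the leaf has no neighbour beyond it. Keeping the sets that already
  contain the leaf fixed gives an injection between the two stars.\<close>

lemma card_indep_star_le_by_involution:
  assumes "finite V"
    and "s ` V \<subseteq> V"
    and involution: "\<And>v. s (s v) = v"
    and "s x = y"
    and adj: "\<And>a b. a \<in> V \<Longrightarrow> b \<in> V \<Longrightarrow> E (s a) (s b) \<Longrightarrow> E a b \<or> a = y \<or> b = y"
  shows "card (indep_star V E t x) \<le> card (indep_star V E t y)"
proof -
  define f where "f A = (if y \<in> A then A else s ` A)" for A
  have inj_s: "inj_on s X" for X
    by (metis involution inj_onI)
  have "s y = x"
    using \<open>s x = y\<close> involution by metis
  have "f A \<in> indep_star V E t y" if A: "A \<in> indep_star V E t x" for A
  proof (cases "y \<in> A")
    case True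
    then show ?thesis using A by (simp add: f_def indep_star_def)
  next
    case False
    have "A \<subseteq> V" "\<forall>a\<in>A. \<forall>b\<in>A. \<not> E a b" "card A = t" "x \<in> A"
      using A by (auto simp: indep_star_def indep_family_def indep_set_def)
    then have "indep_set V E (s ` A)" "card (s ` A) = t" "y \<in> s ` A"
      using False \<open>s ` V \<subseteq> V\<close> \<open>s x = y\<close> adj card_image[OF inj_s]
      by (auto simp: indep_set_def) blast+
    then show ?thesis
      using False by (simp add: f_def indep_star_def indep_family_def)
  qed
  moreover have "inj_on f (indep_star V E t x)"
  proof (rule inj_onI)
    fix A B assume "A \<in> indep_star V E t x" "B \<in> indep_star V E t x" "f A = f B"
    moreover have "x \<notin> s ` X" if "y \<notin> X" for X
      using that \<open>s y = x\<close> inj_s by (metis imageE involution)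
    moreover have "s ` s ` X = X" for X
      by (simp add: image_image involution)
    ultimately show "A = B"
      by (auto simp: f_def indep_star_def split: if_splits) (metis+)
  qed
  moreover have "finite (indep_star V E t y)"
    by (rule finite_subset[of _ "Pow V"])
      (auto simp: indep_star_def indep_family_def indep_set_def \<open>finite V\<close>)
  ultimately show ?thesis
    by (intro card_inj_on_le) auto
qed

lemma finite_spider_vertices: "finite (spider_vertices L)"
proof (rule finite_subset)
  show "spider_vertices L \<subseteq> insert Head (case_prod Leg ` (SIGMA a:{..length L}. {..L ! (a - 1)}))"
    by (auto simp: spider_vertices_def)
qed auto

definition leg_reflect :: "nat \<Rightarrow> nat \<Rightarrow> nat \<Rightarrow> spider_vertex \<Rightarrow> spider_vertex" where
  "leg_reflect i j l v = (case v of Head \<Rightarrow> Head | Leg a m \<Rightarrow>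
      (if a = i \<and> j \<le> m \<and> m \<le> l then Leg i (j + l - m) else Leg a m))"

lemma leg_reflect_involution: "j \<le> l \<Longrightarrow> leg_reflect i j l (leg_reflect i j l v) = v"
  by (cases v) (auto simp: leg_reflect_def)

lemma leg_reflect_start: "j \<le> l \<Longrightarrow> leg_reflect i j l (Leg i j) = Leg i l"
  by (simp add: leg_reflect_def)

lemma leg_reflect_spider_vertices:
  assumes "1 \<le> j" "j \<le> l" "l = L ! (i - 1)"
  shows "leg_reflect i j l ` spider_vertices L \<subseteq> spider_vertices L"
  using assms by (auto simp: spider_vertices_def leg_reflect_def)

lemma spider_adj_leg_reflect:
  assumes "spider_adj L (leg_reflect i j l a) (leg_reflect i j l b)" "1 \<le> j" "j \<le> l" "l = L ! (i - 1)"
  shows "spider_adj L a b \<or> a = Leg i l \<or> b = Leg i l"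
  using assms by (cases a; cases b;
    auto simp: spider_adj_def spider_adj0_def leg_reflect_def split: if_splits; arith)

theorem theorem2p1:
  fixes L :: "nat list" and t i j :: nat
  assumes "length L \<ge> 1"
    and "\<forall>l\<in>set L. l > 0"
    and "1 \<le> t" and "t \<le> indep_number (spider_vertices L) (spider_adj L)"
    and "1 \<le> i" and "i \<le> length L"
    and "1 \<le> j" and "j < L ! (i - 1)"
  shows "card (indep_star (spider_vertices L) (spider_adj L) t (Leg i j))
         \<le> card (indep_star (spider_vertices L) (spider_adj L) t (Leg i (L ! (i - 1))))"
proof (rule card_indep_star_le_by_involution)
  let ?l = "L ! (i - 1)"
  have "j \<le> ?l" using assms by simp
  then show "\<And>v. leg_reflect i j ?l (leg_reflect i j ?l v) = v"
    and "leg_reflect i j ?l (Leg i j) = Leg i ?l"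
    and "leg_reflect i j ?l ` spider_vertices L \<subseteq> spider_vertices L"
    and "\<And>a b. spider_adj L (leg_reflect i j ?l a) (leg_reflect i j ?l b) \<Longrightarrow>
           spider_adj L a b \<or> a = Leg i ?l \<or> b = Leg i ?l"
    using \<open>1 \<le> j\<close> leg_reflect_involution leg_reflect_start leg_reflect_spider_vertices
      spider_adj_leg_reflect by auto
qed (rule finite_spider_vertices)

end
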